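(* Let $\alpha_0>\alpha_1>0$. Let $y_1(t)$, $t\in\mathbb{R}_{\ge0}$, be a continuous-time Poisson simple random walk of rate $\alpha_1$ with $y_1(0)=0$ (i.e. the counting function of a rate-$\alpha_1$ Poisson process on $(0,\infty)$). Given the trajectory of $y_1$, construct a process $x_1(t)$ with $x_1(0)=0$ that stays in the chamber $x_1(t)\ge y_1(t)$ for all $t$, as follows: $x_1$ jumps up by $1$ at rate $\alpha_0$ whenever $x_1(t)>y_1(t)$, and at rate $\alpha_0-\alpha_1$ whenever $x_1(t)=y_1(t)$; moreover, if $x_1(t-)=y_1(t-)$ and $y_1$ jumps up by $1$ at time $t$, then $x_1$ is deterministically pushed up by $1$ at the same time. Then $\{x_1(t)\}_{t\ge0}$ is a continuous-time Poisson simple random walk of rate $\alpha_0$. *)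

theory Defs
  imports "HOL-Probability.Probability"
begin

text \<open>Left limit of a real-indexed, nat-valued path (nat carries the discrete topology).\<close>
definition lft :: "(real \<Rightarrow> nat) \<Rightarrow> real \<Rightarrow> nat" where
  "lft f t = Lim (at_left t) f"

definition counting_path :: "(real \<Rightarrow> nat) \<Rightarrow> bool" where
  "counting_path f \<longleftrightarrow> f 0 = 0 \<and> mono_on {0..} f \<and>
     (\<forall>t\<ge>0. (f \<longlongrightarrow> f t) (at_right t))"

definition poisson_process :: "'w measure \<Rightarrow> real \<Rightarrow> ('w \<Rightarrow> real \<Rightarrow> nat) \<Rightarrow> bool" where
  "poisson_process M a N \<longleftrightarrow>
     (\<forall>\<omega>\<in>space M. counting_path (N \<omega>)) \<and>
     (\<forall>t. (\<lambda>\<omega>. N \<omega> t) \<in> measurable M (count_space UNIV)) \<and>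
     (\<forall>(ts :: nat \<Rightarrow> real) k. 0 \<le> ts 0 \<longrightarrow> (\<forall>i<k. ts i < ts (Suc i)) \<longrightarrow>
        prob_space.indep_vars M (\<lambda>_. count_space UNIV)
          (\<lambda>i \<omega>. N \<omega> (ts (Suc i)) - N \<omega> (ts i)) {..<k}) \<and>
     (\<forall>s t. 0 \<le> s \<longrightarrow> s < t \<longrightarrow>
        distr M (count_space UNIV) (\<lambda>\<omega>. N \<omega> t - N \<omega> s) = measure_pmf (poisson_pmf (a * (t - s))))"

end

theory Submission
  imports Defs
begin

text \<open>Cut time into cells so fine that, outside an event of small probability, no cell
  contains two jumps of \<open>y\<close>, \<open>p\<close>, \<open>q\<close>. Then over a cell \<open>x\<close> gains the increment of \<open>p\<close>, plus
  that of \<open>q\<close> if \<open>x > y\<close> at the start of the cell and that of \<open>y\<close> if \<open>x = y\<close>. Which of the two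
  rate-\<open>\<alpha>1\<close> processes is added is decided by the past, while the increments over the cell
  are independent of the past; so the increment of this skeleton is Poisson with parameter
  \<open>(\<alpha>0 - \<alpha>1 + \<alpha>1) \<cdot> length\<close>, independently of the past. The probability of a cell with two
  jumps is \<open>O(length\<^sup>2)\<close>, so on the dyadic refinements of a fixed grid it tends to \<open>0\<close>, and the
  increments of \<open>x\<close> over the grid have the joint law of independent Poisson variables.\<close>

section \<open>Counting paths\<close>

lemma lft_eqI:
  assumes "a < t" and "\<And>r. a < r \<Longrightarrow> r < t \<Longrightarrow> f r = c"
  shows "lft f t = c"
  unfolding lft_def
proof (rule tendsto_Lim)
  show "(f \<longlongrightarrow> c) (at_left t)"
    unfolding tendsto_discrete
    using eventually_at_left_real[OF assms(1)] by (rule eventually_mono) (use assms(2) in auto)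
qed simp

lemma counting_path_mono:
  "counting_path f \<Longrightarrow> 0 \<le> a \<Longrightarrow> a \<le> b \<Longrightarrow> f a \<le> f b"
  unfolding counting_path_def by (auto simp: mono_on_def)

lemma counting_path_eq_between:
  assumes "counting_path f" "0 \<le> a" "a \<le> r" "r \<le> b" "f b = f a"
  shows "f r = f a"
  using counting_path_mono[OF assms(1), of a r] counting_path_mono[OF assms(1), of r b] assms
  by auto

lemma counting_path_add:
  assumes f: "counting_path f" and g: "counting_path g"
  shows "counting_path (\<lambda>t. f t + g t)"
  unfolding counting_path_def
proof (intro conjI allI impI)
  show "f 0 + g 0 = 0" "mono_on {0..} (\<lambda>t. f t + g t)"
    using f g by (auto simp: counting_path_def mono_on_def intro: add_mono)
  fix t :: real assume "0 \<le> t"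
  then have "eventually (\<lambda>r. f r = f t) (at_right t)" "eventually (\<lambda>r. g r = g t) (at_right t)"
    using f g unfolding counting_path_def tendsto_discrete by auto
  then show "((\<lambda>t. f t + g t) \<longlongrightarrow> f t + g t) (at_right t)"
    unfolding tendsto_discrete by eventually_elim simp
qed

text \<open>The end of the level set of \<open>f\<close> through \<open>a\<close>: right-continuity makes the value change at
  the supremum itself.\<close>

lemma counting_path_level_end:
  assumes f: "counting_path f" and "0 \<le> a" "a \<le> b"
  obtains s where "a \<le> s" "s \<le> b" "\<And>t. a \<le> t \<Longrightarrow> t < s \<Longrightarrow> f t = f a"
    "s < b \<Longrightarrow> f s \<noteq> f a"
proof -
  let ?T = "{t \<in> {a..b}. f t = f a}"
  define s where "s = Sup ?T"
  have ne: "?T \<noteq> {}" and bdd: "bdd_above ?T"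
    using assms by (auto intro: bdd_aboveI[of _ b])
  have "a \<le> s"
    unfolding s_def using assms by (intro cSup_upper bdd) auto
  moreover have "s \<le> b"
    unfolding s_def using ne by (intro cSup_least) auto
  moreover have "f t = f a" if "a \<le> t" "t < s" for t
  proof -
    obtain t' where "t' \<in> ?T" "t < t'"
      using \<open>t < s\<close> less_cSup_iff[OF ne bdd] unfolding s_def by auto
    then show ?thesis
      using counting_path_eq_between[OF f \<open>0 \<le> a\<close> \<open>a \<le> t\<close>, of t'] by auto
  qed
  moreover have "f s \<noteq> f a" if "s < b"
  proof
    assume eq: "f s = f a"
    have "0 \<le> s" using \<open>a \<le> s\<close> \<open>0 \<le> a\<close> by linarith
    then have "eventually (\<lambda>r. f r = f s \<and> r \<in> {s<..<b}) (at_right s)"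
      using f eventually_at_right_real[OF that] unfolding counting_path_def tendsto_discrete
      by (auto intro: eventually_conj)
    then obtain r where r: "s < r" "r < b" "f r = f a"
      using eventually_happens[of _ "at_right s"] eq by auto
    with \<open>a \<le> s\<close> have "r \<in> ?T" by auto
    then have "r \<le> s" unfolding s_def using bdd by (rule cSup_upper)
    with r show False by simp
  qed
  ultimately show thesis using that by blast
qed

lemma counting_path_eq_if_no_jump:
  assumes f: "counting_path f" and "0 \<le> a" "a \<le> b"
    and no_jump: "\<And>t. a < t \<Longrightarrow> t \<le> b \<Longrightarrow> f t = lft f t"
  shows "f b = f a"
proof -
  obtain s where s: "a \<le> s" "s \<le> b" "\<And>t. a \<le> t \<Longrightarrow> t < s \<Longrightarrow> f t = f a"
    "s < b \<Longrightarrow> f s \<noteq> f a"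
    using counting_path_level_end[OF assms(1-3)] by blast
  have "f s = f a"
  proof (cases "a < s")
    case True
    have "lft f s = f a" by (rule lft_eqI[OF True], rule s(3)) auto
    then show ?thesis using no_jump[OF True s(2)] by simp
  qed (use s(1) in simp)
  with s(2,4) show ?thesis by force
qed

lemma counting_path_split_at_jump:
  assumes f: "counting_path f" and "0 \<le> a" "a < b" and "f b \<le> Suc (f a)"
  obtains s where "a < s" "s \<le> b" "\<And>t. a \<le> t \<Longrightarrow> t < s \<Longrightarrow> f t = f a"
    "\<And>t. s \<le> t \<Longrightarrow> t \<le> b \<Longrightarrow> f t = f b"
proof (cases "f b = f a")
  case True
  show ?thesis
  proof (rule that[of b])
    show "f t = f a" if "a \<le> t" "t < b" for t
      using counting_path_eq_between[OF f \<open>0 \<le> a\<close> \<open>a \<le> t\<close> _ True] that by simp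
  qed (use assms in auto)
next
  case False
  obtain s where s: "a \<le> s" "s \<le> b" "\<And>t. a \<le> t \<Longrightarrow> t < s \<Longrightarrow> f t = f a"
    "s < b \<Longrightarrow> f s \<noteq> f a"
    using counting_path_level_end[OF f \<open>0 \<le> a\<close> less_imp_le[OF \<open>a < b\<close>]] by blast
  have "f s \<noteq> f a" using s(2,4) False by fastforce
  then have "a < s" using s(1) by (metis order_le_less)
  have "f t = f b" if "s \<le> t" "t \<le> b" for t
  proof -
    have "f a \<le> f s" "f s \<le> f t" "f t \<le> f b"
      using counting_path_mono[OF f] that s(1) \<open>0 \<le> a\<close> by auto
    then show ?thesis using \<open>f s \<noteq> f a\<close> \<open>f b \<le> Suc (f a)\<close> by linarith
  qed
  with \<open>a < s\<close> s(2,3) show ?thesis by (rule that)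
qed

lemma constant_onD: "f constant_on A \<Longrightarrow> a \<in> A \<Longrightarrow> t \<in> A \<Longrightarrow> f t = f a"
  unfolding constant_on_def by auto

lemma lft_eq_if_constant_on:
  assumes "f constant_on {a..<t}" "a < t"
  shows "lft f t = f a"
  by (rule lft_eqI[OF \<open>a < t\<close>], rule constant_onD[OF assms(1)]) (use assms(2) in auto)

section \<open>The pushed dynamics along one path\<close>

text \<open>With \<open>p\<close> of rate \<open>\<alpha>0 - \<alpha>1\<close> and \<open>q\<close> of rate \<open>\<alpha>1\<close>, this makes \<open>x\<close> jump at rate \<open>\<alpha>0\<close>
  above \<open>y\<close> and at rate \<open>\<alpha>0 - \<alpha>1\<close> on the wall \<open>x = y\<close>, where \<open>y\<close> pushes it.\<close>

definition pushed_jumps :: "(real \<Rightarrow> nat) \<Rightarrow> (real \<Rightarrow> nat) \<Rightarrow> (real \<Rightarrow> nat) \<Rightarrow> (real \<Rightarrow> nat) \<Rightarrow> bool"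
  where "pushed_jumps x y p q \<longleftrightarrow> (\<forall>t>0.
    x t = lft x t
      + (if p t \<noteq> lft p t then 1 else 0)
      + (if q t \<noteq> lft q t \<and> lft x t > lft y t then 1 else 0)
      + (if y t \<noteq> lft y t \<and> lft x t = lft y t then 1 else 0))"

lemma pushed_jumps_const:
  assumes x: "counting_path x" "pushed_jumps x y p q" and "0 \<le> c" "c \<le> d"
    and "y constant_on {c..d}" "p constant_on {c..d}" "q constant_on {c..d}"
  shows "x d = x c"
proof (rule counting_path_eq_if_no_jump[OF x(1) \<open>0 \<le> c\<close> \<open>c \<le> d\<close>])
  fix t assume t: "c < t" "t \<le> d"
  have "lft f t = f t" if "f constant_on {c..d}" for f
  proof -
    have "lft f t = f c"
      using t by (intro lft_eq_if_constant_on constant_on_subset[OF that]) auto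
    also have "f c = f t"
      using constant_onD[OF that, of c t] t \<open>c \<le> d\<close> by simp
    finally show ?thesis .
  qed
  then show "x t = lft x t"
    using x(2) assms(5-7) t \<open>0 \<le> c\<close> unfolding pushed_jumps_def by simp
qed

lemma pushed_jumps_single_jump:
  assumes x: "counting_path x" "pushed_jumps x y p q" and "0 \<le> a" "a < s" "s \<le> b"
    and before: "y constant_on {a..<s}" "p constant_on {a..<s}" "q constant_on {a..<s}"
    and after: "y constant_on {s..b}" "p constant_on {s..b}" "q constant_on {s..b}"
  shows "x b = x a
      + (if p b \<noteq> p a then 1 else 0)
      + (if q b \<noteq> q a \<and> x a > y a then 1 else 0)
      + (if y b \<noteq> y a \<and> x a = y a then 1 else 0)"
proof -
  have "x t = x a" if "a \<le> t" "t < s" for t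
    using pushed_jumps_const[OF x \<open>0 \<le> a\<close> \<open>a \<le> t\<close>] before that
    by (meson atLeastAtMost_subseteq_atLeastLessThan_iff constant_on_subset order.refl)
  then have "x constant_on {a..<s}"
    unfolding constant_on_def by (meson atLeastLessThan_iff)
  then have lft_s: "lft x s = x a" "lft y s = y a" "lft p s = p a" "lft q s = q a"
    using lft_eq_if_constant_on \<open>a < s\<close> before by blast+
  have at_s: "y s = y b" "p s = p b" "q s = q b"
    using constant_onD[of _ "{s..b}" b s] after \<open>s \<le> b\<close> by auto
  have "x b = x s"
    by (rule pushed_jumps_const[OF x _ \<open>s \<le> b\<close> after]) (use assms(3,4) in linarith)
  moreover have "0 < s" using assms(3,4) by linarith
  ultimately show ?thesis
    using x(2) lft_s at_s unfolding pushed_jumps_def by auto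
qed

lemma pushed_jumps_step:
  assumes paths: "counting_path y" "counting_path p" "counting_path q"
    and x: "counting_path x" "pushed_jumps x y p q"
    and "0 \<le> a" "a < b" and at_most_one: "y b + p b + q b \<le> Suc (y a + p a + q a)"
    and above: "y a \<le> x a"
  shows "x b = x a + (p b - p a) + (if y a < x a then q b - q a else y b - y a)"
    and "y b \<le> x b"
proof -
  let ?h = "\<lambda>t. y t + p t + q t"
  have h: "counting_path ?h"
    using paths by (intro counting_path_add)
  obtain s where s: "a < s" "s \<le> b" "\<And>t. a \<le> t \<Longrightarrow> t < s \<Longrightarrow> ?h t = ?h a"
    "\<And>t. s \<le> t \<Longrightarrow> t \<le> b \<Longrightarrow> ?h t = ?h b"
    using counting_path_split_at_jump[OF h \<open>0 \<le> a\<close> \<open>a < b\<close> at_most_one] by blast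
  have mono: "y u \<le> y v" "p u \<le> p v" "q u \<le> q v" if "a \<le> u" "u \<le> v" for u v
    using paths that \<open>0 \<le> a\<close> by (auto intro: counting_path_mono)
  have "y t = y a \<and> p t = p a \<and> q t = q a" if "t \<in> {a..<s}" for t
  proof -
    from that have "a \<le> t" "t < s" by auto
    with s(3) mono[of a t] show ?thesis by (intro conjI) force+
  qed
  then have before: "y constant_on {a..<s}" "p constant_on {a..<s}" "q constant_on {a..<s}"
    unfolding constant_on_def by blast+
  have "y t = y b \<and> p t = p b \<and> q t = q b" if "t \<in> {s..b}" for t
  proof -
    from that s(1) have "a \<le> t" "s \<le> t" "t \<le> b" by auto
    with s(4) mono[of t b] show ?thesis by (intro conjI) force+
  qed
  then have after: "y constant_on {s..b}" "p constant_on {s..b}" "q constant_on {s..b}"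
    unfolding constant_on_def by blast+
  have "x b = x a
      + (if p b \<noteq> p a then 1 else 0)
      + (if q b \<noteq> q a \<and> x a > y a then 1 else 0)
      + (if y b \<noteq> y a \<and> x a = y a then 1 else 0)"
    using pushed_jumps_single_jump[OF x \<open>0 \<le> a\<close> s(1,2)] before after by simp
  moreover have "y a \<le> y b" "p a \<le> p b" "q a \<le> q b"
    using mono[of a b] \<open>a < b\<close> by auto
  ultimately show "x b = x a + (p b - p a) + (if y a < x a then q b - q a else y b - y a)"
    and "y b \<le> x b"
    using at_most_one above by auto
qed

section \<open>Poisson variables\<close>

lemma poisson_pmf_convolution:
  fixes a b :: real
  assumes "0 < a" "0 < b"
  shows "(\<Sum>k\<le>n. pmf (poisson_pmf a) k * pmf (poisson_pmf b) (n - k)) = pmf (poisson_pmf (a + b)) n"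
proof -
  have "(\<Sum>k\<le>n. pmf (poisson_pmf a) k * pmf (poisson_pmf b) (n - k))
      = (\<Sum>k\<le>n. exp (-(a + b)) / fact n * (real (n choose k) * a ^ k * b ^ (n - k)))"
  proof (rule sum.cong[OF refl])
    fix k assume "k \<in> {..n}"
    then have "real (n choose k) = fact n / (fact k * fact (n - k))"
      using binomial_fact[of k n] by simp
    then show "pmf (poisson_pmf a) k * pmf (poisson_pmf b) (n - k) =
        exp (-(a + b)) / fact n * (real (n choose k) * a ^ k * b ^ (n - k))"
      using assms by (simp add: exp_add[symmetric] field_simps exp_diff)
  qed
  also have "\<dots> = exp (-(a + b)) / fact n * (a + b) ^ n"
    by (simp add: binomial_ring sum_distrib_left)
  also have "\<dots> = pmf (poisson_pmf (a + b)) n"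
    using assms by simp
  finally show ?thesis .
qed

lemma poisson_prob_at_least_2:
  fixes a :: real
  assumes "0 < a"
  shows "measure_pmf.prob (poisson_pmf a) {n. 2 \<le> n} \<le> a\<^sup>2"
proof -
  have "{n::nat. 2 \<le> n} = UNIV - {0, 1}" by auto
  then have "measure_pmf.prob (poisson_pmf a) {n. 2 \<le> n} = 1 - measure_pmf.prob (poisson_pmf a) {0, 1}"
    using measure_pmf.prob_compl[of "{0, 1}" "poisson_pmf a"] by simp
  also have "measure_pmf.prob (poisson_pmf a) {0, 1} = exp (-a) * (1 + a)"
    using assms by (subst measure_measure_pmf_finite) (auto simp: algebra_simps)
  finally have eq: "measure_pmf.prob (poisson_pmf a) {n. 2 \<le> n} = 1 - exp (-a) * (1 + a)" .
  have "(1 - a) * (1 + a) \<le> exp (-a) * (1 + a)"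
    using exp_ge_add_one_self[of "-a"] assms by (intro mult_right_mono) auto
  then show ?thesis
    unfolding eq by (simp add: algebra_simps power2_eq_square)
qed

lemma sets_Collect_diff_in:
  fixes f h :: "'a \<Rightarrow> nat"
  assumes [measurable]: "f \<in> measurable N (count_space UNIV)" "h \<in> measurable N (count_space UNIV)"
  shows "{\<omega>\<in>space N. f \<omega> - h \<omega> \<in> S} \<in> sets N"
  by measurable

lemma borel_measurable_nat_count_space:
  "(f :: 'a \<Rightarrow> nat) \<in> measurable N (count_space UNIV) \<Longrightarrow> f \<in> borel_measurable N"
  by (simp add: measurable_cong_sets[OF refl sets_borel_eq_count_space])

context prob_space
begin

lemma prob_Int_add_poisson:
  fixes X Y :: "'a \<Rightarrow> nat"
  assumes A: "A \<in> events" and [measurable]: "X \<in> measurable M (count_space UNIV)"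
    "Y \<in> measurable M (count_space UNIV)"
    and "0 < a" "0 < b"
    and joint: "\<And>i j. prob (A \<inter> {\<omega>\<in>space M. X \<omega> = i \<and> Y \<omega> = j})
      = prob A * pmf (poisson_pmf a) i * pmf (poisson_pmf b) j"
  shows "prob (A \<inter> {\<omega>\<in>space M. X \<omega> + Y \<omega> = n}) = prob A * pmf (poisson_pmf (a + b)) n"
proof -
  let ?E = "\<lambda>i. A \<inter> {\<omega>\<in>space M. X \<omega> = i \<and> Y \<omega> = n - i}"
  have "A \<inter> {\<omega>\<in>space M. X \<omega> + Y \<omega> = n} = (\<Union>i\<le>n. ?E i)"
    by auto
  moreover have "prob (\<Union>i\<le>n. ?E i) = (\<Sum>i\<le>n. prob (?E i))"
    using A by (intro finite_measure_finite_Union) (auto simp: disjoint_family_on_def)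
  ultimately have "prob (A \<inter> {\<omega>\<in>space M. X \<omega> + Y \<omega> = n})
      = prob A * (\<Sum>i\<le>n. pmf (poisson_pmf a) i * pmf (poisson_pmf b) (n - i))"
    by (simp add: joint sum_distrib_left mult.assoc)
  then show ?thesis
    using poisson_pmf_convolution[OF \<open>0 < a\<close> \<open>0 < b\<close>] by simp
qed

lemma prob_Int_in_eq_scaled_measure_pmf:
  fixes Z :: "'a \<Rightarrow> nat"
  assumes A: "A \<in> events" and [measurable]: "Z \<in> measurable M (count_space UNIV)"
    and point: "\<And>n. prob (A \<inter> {\<omega>\<in>space M. Z \<omega> = n}) = c * pmf \<mu> n"
  shows "prob (A \<inter> {\<omega>\<in>space M. Z \<omega> \<in> S}) = c * measure_pmf.prob \<mu> S"
proof -
  define B where "B n = (if n \<in> S then A \<inter> {\<omega>\<in>space M. Z \<omega> = n} else {})" for n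
  define C where "C n = (if n \<in> S then {n} else {})" for n
  have "(\<lambda>n. prob (B n)) sums prob (\<Union>n. B n)"
    using A by (intro finite_measure_UNION) (auto simp: B_def disjoint_family_on_def)
  moreover have "(\<Union>n. B n) = A \<inter> {\<omega>\<in>space M. Z \<omega> \<in> S}"
    unfolding B_def by (auto split: if_splits)
  moreover have "prob (B n) = c * measure_pmf.prob \<mu> (C n)" for n
    unfolding B_def C_def using point by (simp add: measure_pmf_single)
  ultimately have lhs: "(\<lambda>n. c * measure_pmf.prob \<mu> (C n)) sums prob (A \<inter> {\<omega>\<in>space M. Z \<omega> \<in> S})"
    by simp
  have "(\<lambda>n. measure_pmf.prob \<mu> (C n)) sums measure_pmf.prob \<mu> (\<Union>n. C n)"
    by (intro measure_pmf.finite_measure_UNION) (auto simp: disjoint_family_on_def C_def)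
  moreover have "(\<Union>n. C n) = S"
    unfolding C_def by (auto split: if_splits)
  ultimately have "(\<lambda>n. c * measure_pmf.prob \<mu> (C n)) sums (c * measure_pmf.prob \<mu> S)"
    by (simp add: sums_mult)
  with lhs show ?thesis
    by (rule sums_unique2)
qed

lemma prob_diff_le_if_agree_outside:
  assumes "A \<in> events" "B \<in> events" "C \<in> events" and "A - C = B - C"
  shows "\<bar>prob A - prob B\<bar> \<le> prob C"
proof -
  have "prob U \<le> prob V + prob C" if "U - C = V - C" "U \<in> events" "V \<in> events" for U V
  proof -
    have "prob U \<le> prob (V \<union> C)"
      using that assms(3) by (intro finite_measure_mono) auto
    also have "\<dots> \<le> prob V + prob C"
      using that assms(3) by (intro measure_Un_le) auto
    finally show ?thesis .
  qed
  from this[of A B] this[of B A] assms show ?thesis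
    by (simp add: abs_le_iff)
qed

end

definition time_grid :: "(nat \<Rightarrow> real) \<Rightarrow> bool"
  where "time_grid g \<longleftrightarrow> strict_mono g \<and> g 0 = 0"

lemma time_grid_nonneg: "time_grid g \<Longrightarrow> 0 \<le> g k"
  unfolding time_grid_def using strict_mono_less_eq[of g 0 k] by auto

lemma time_grid_less: "time_grid g \<Longrightarrow> g k < g (Suc k)"
  unfolding time_grid_def by (auto intro: strict_monoD)

lemma time_grid_through:
  fixes ts :: "nat \<Rightarrow> real"
  assumes "0 \<le> ts 0" "\<forall>i<k. ts i < ts (Suc i)"
  obtains u d where "time_grid u" "\<And>i. i \<le> k \<Longrightarrow> u (d + i) = ts i"
proof -
  define d :: nat where "d = (if ts 0 = 0 then 0 else 1)"
  define u where "u j = (if j < d then 0 else if j \<le> d + k then ts (j - d) else ts k + real (j - (d + k)))"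
    for j
  have "u j < u (Suc j)" for j
  proof -
    consider "j < d" | "d \<le> j" "j < d + k" | "j = d + k" | "d + k < j"
      by linarith
    then show ?thesis
    proof cases
      case 1
      then show ?thesis using assms(1) by (auto simp: u_def d_def split: if_splits)
    next
      case 2
      then have "Suc j - d = Suc (j - d)" "j - d < k" by auto
      then show ?thesis using 2 assms(2) by (simp add: u_def)
    qed (auto simp: u_def)
  qed
  moreover have "u 0 = 0"
    by (simp add: u_def d_def)
  moreover have "u (d + i) = ts i" if "i \<le> k" for i
    using that by (simp add: u_def)
  ultimately show thesis
    using that[of u d] unfolding time_grid_def strict_mono_Suc_iff by blast
qed

definition dyadic_refinement :: "(nat \<Rightarrow> real) \<Rightarrow> nat \<Rightarrow> nat \<Rightarrow> real" where
  "dyadic_refinement u n i =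
     u (i div 2^n) + real (i mod 2^n) / 2^n * (u (Suc (i div 2^n)) - u (i div 2^n))"

lemma dyadic_refinement_block: "dyadic_refinement u n (j * 2^n) = u j"
  unfolding dyadic_refinement_def by simp

lemma dyadic_refinement_step:
  "dyadic_refinement u n (Suc i) - dyadic_refinement u n i = (u (Suc (i div 2^n)) - u (i div 2^n)) / 2^n"
proof (cases "Suc (i mod 2^n) = 2^n")
  case True
  then have "real (Suc (i mod 2^n)) = 2^n"
    by (metis of_nat_numeral of_nat_power)
  then have r: "real (i mod 2^n) = 2^n - 1"
    by simp
  have d: "Suc i div 2^n = Suc (i div 2^n)" and m: "Suc i mod 2^n = 0"
    using True div_Suc[of i "2^n"] mod_Suc[of i "2^n"] by auto
  show ?thesis
    unfolding dyadic_refinement_def d m r by (simp add: field_simps)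
next
  case False
  then have "Suc i div 2^n = i div 2^n" "Suc i mod 2^n = Suc (i mod 2^n)"
    using div_Suc[of i "2^n"] mod_Suc[of i "2^n"] by auto
  then show ?thesis
    unfolding dyadic_refinement_def by (simp add: field_simps)
qed

lemma time_grid_dyadic_refinement:
  assumes "time_grid u"
  shows "time_grid (dyadic_refinement u n)"
proof -
  have "dyadic_refinement u n i < dyadic_refinement u n (Suc i)" for i
  proof -
    have "0 < (u (Suc (i div 2^n)) - u (i div 2^n)) / 2^n"
      using time_grid_less[OF assms, of "i div 2^n"] by simp
    then show ?thesis
      using dyadic_refinement_step[of u n i] by linarith
  qed
  moreover have "dyadic_refinement u n 0 = 0"
    using assms by (simp add: dyadic_refinement_def time_grid_def)
  ultimately show ?thesis
    unfolding time_grid_def strict_mono_Suc_iff by blast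
qed

lemma dyadic_refinement_step_le:
  assumes "time_grid u" and "k < m * 2^n"
  shows "dyadic_refinement u n (Suc k) - dyadic_refinement u n k \<le> u m / 2^n"
proof -
  have "Suc (k div 2^n) \<le> m"
    using assms(2) by (simp add: div_less_iff_less_mult Suc_le_eq)
  then have "u (Suc (k div 2^n)) \<le> u m"
    using assms(1) by (simp add: time_grid_def strict_mono_less_eq)
  moreover have "0 \<le> u (k div 2^n)"
    using time_grid_nonneg[OF assms(1)] .
  ultimately show ?thesis
    unfolding dyadic_refinement_step by (simp add: divide_right_mono)
qed

section \<open>The skeleton chain on a grid\<close>

locale pushed_poisson = prob_space M for M :: "'w measure" +
  fixes \<alpha>0 \<alpha>1 :: real and y p q x :: "'w \<Rightarrow> real \<Rightarrow> nat"
  assumes rates: "\<alpha>1 < \<alpha>0" "0 < \<alpha>1"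
    and poisson_y: "poisson_process M \<alpha>1 y"
    and poisson_p: "poisson_process M (\<alpha>0 - \<alpha>1) p"
    and poisson_q: "poisson_process M \<alpha>1 q"
    and indep_drivers: "indep_vars (\<lambda>_. Pi\<^sub>M UNIV (\<lambda>_. count_space UNIV))
      (\<lambda>i. if i = (0::nat) then y else if i = 1 then p else q) {0, 1, 2}"
    and measurable_x: "\<And>t. (\<lambda>\<omega>. x \<omega> t) \<in> measurable M (count_space UNIV)"
    and counting_path_x: "\<And>\<omega>. \<omega> \<in> space M \<Longrightarrow> counting_path (x \<omega>)"
    and pushed_jumps_x: "\<And>\<omega>. \<omega> \<in> space M \<Longrightarrow> pushed_jumps (x \<omega>) (y \<omega>) (p \<omega>) (q \<omega>)"
begin

definition driver :: "nat \<Rightarrow> 'w \<Rightarrow> real \<Rightarrow> nat"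
  where "driver c = (if c = 0 then y else if c = 1 then p else q)"

definition rate :: "nat \<Rightarrow> real"
  where "rate c = (if c = 0 then \<alpha>1 else if c = 1 then \<alpha>0 - \<alpha>1 else \<alpha>1)"

lemma driver_simps [simp]: "driver 0 = y" "driver 1 = p" "driver (Suc 0) = p" "driver 2 = q"
  unfolding driver_def by auto

lemma rate_simps [simp]: "rate 0 = \<alpha>1" "rate 1 = \<alpha>0 - \<alpha>1" "rate (Suc 0) = \<alpha>0 - \<alpha>1" "rate 2 = \<alpha>1"
  unfolding rate_def by auto

lemma rate_pos: "0 < rate c"
  using rates unfolding rate_def by auto

lemma poisson_process_driver: "poisson_process M (rate c) (driver c)"
  unfolding driver_def rate_def using poisson_y poisson_p poisson_q by auto

lemma measurable_driver [measurable]: "(\<lambda>\<omega>. driver c \<omega> t) \<in> measurable M (count_space UNIV)"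
  using poisson_process_driver[of c] unfolding poisson_process_def by auto

lemma counting_path_driver: "\<omega> \<in> space M \<Longrightarrow> counting_path (driver c \<omega>)"
  using poisson_process_driver[of c] unfolding poisson_process_def by auto

declare measurable_x [measurable]

definition cell_inc :: "(nat \<Rightarrow> real) \<Rightarrow> nat \<Rightarrow> nat \<Rightarrow> 'w \<Rightarrow> nat"
  where "cell_inc g c k \<omega> = driver c \<omega> (g (Suc k)) - driver c \<omega> (g k)"

definition cell_law :: "(nat \<Rightarrow> real) \<Rightarrow> nat \<Rightarrow> nat \<Rightarrow> nat pmf"
  where "cell_law g c k = poisson_pmf (rate c * (g (Suc k) - g k))"

lemma measurable_cell_inc [measurable]: "cell_inc g c k \<in> measurable M (count_space UNIV)"
  unfolding cell_inc_def[abs_def] by measurable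

lemma prob_cell_inc:
  assumes "time_grid g"
  shows "prob (cell_inc g c k -` S \<inter> space M) = measure_pmf.prob (cell_law g c k) S"
proof -
  have "distr M (count_space UNIV) (cell_inc g c k) = measure_pmf (cell_law g c k)"
    using poisson_process_driver[of c] time_grid_nonneg[OF assms] time_grid_less[OF assms]
    unfolding poisson_process_def cell_inc_def[abs_def] cell_law_def by auto
  then show ?thesis
    using measure_distr[OF measurable_cell_inc, of S g c k] by simp
qed

lemma indep_vars_cell_inc:
  assumes "time_grid g"
  shows "indep_vars (\<lambda>_. count_space UNIV) (cell_inc g c) {..<K}"
  using poisson_process_driver[of c] time_grid_nonneg[OF assms] time_grid_less[OF assms]
  unfolding poisson_process_def cell_inc_def[abs_def] by blast

lemma prob_cell_incs_one_driver:
  assumes "time_grid g" and "finite K"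
  shows "prob {\<omega>\<in>space M. \<forall>k\<in>K. cell_inc g c k \<omega> \<in> S k}
    = (\<Prod>k\<in>K. prob (cell_inc g c k -` S k \<inter> space M))"
proof (cases "K = {}")
  case True
  then show ?thesis by (simp add: prob_space)
next
  case False
  have "K \<subseteq> {..<Suc (Max K)}"
    using assms(2) by (auto simp: less_Suc_eq_le)
  then have "prob (\<Inter>k\<in>K. cell_inc g c k -` S k \<inter> space M)
      = (\<Prod>k\<in>K. prob (cell_inc g c k -` S k \<inter> space M))"
    by (intro indep_varsD[OF indep_vars_cell_inc[OF assms(1)]] False assms(2)) auto
  moreover have "(\<Inter>k\<in>K. cell_inc g c k -` S k \<inter> space M) = {\<omega>\<in>space M. \<forall>k\<in>K. cell_inc g c k \<omega> \<in> S k}"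
    using False by auto
  ultimately show ?thesis
    by simp
qed

definition cell_events :: "(nat \<Rightarrow> real) \<Rightarrow> nat \<times> nat \<Rightarrow> 'w set set"
  where "cell_events g ck = {cell_inc g (fst ck) (snd ck) -` S \<inter> space M | S. True}"

lemma cell_events_subset_events: "cell_events g ck \<subseteq> events"
  unfolding cell_events_def by auto

lemma Int_stable_cell_events: "Int_stable (cell_events g ck)"
  unfolding Int_stable_def cell_events_def
  by (auto, rule_tac x="S \<inter> Sa" in exI, auto)

text \<open>Independence within one driver comes from its independent increments, independence
  across drivers from the independence of the three paths.\<close>

lemma indep_sets_cell_events:
  assumes "time_grid g"
  shows "indep_sets (cell_events g) ({0, 1, 2} \<times> UNIV)"
proof (rule indep_setsI)
  show "cell_events g ck \<subseteq> events" for ck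
    by (rule cell_events_subset_events)
  fix A J assume J: "J \<noteq> {}" "J \<subseteq> {0, 1, 2} \<times> UNIV" "finite J"
    and A: "\<forall>j\<in>J. A j \<in> cell_events g j"
  then have "\<forall>j\<in>J. \<exists>S. A j = cell_inc g (fst j) (snd j) -` S \<inter> space M"
    unfolding cell_events_def by auto
  then obtain S where S: "\<And>j. j \<in> J \<Longrightarrow> A j = cell_inc g (fst j) (snd j) -` S j \<inter> space M"
    by metis
  define Jc where "Jc c = {k. (c, k) \<in> J}" for c
  have finite_Jc: "finite (Jc c)" for c
    using finite_imageI[OF J(3), of snd] by (rule finite_subset[rotated]) (force simp: Jc_def)
  have J_eq: "J = Sigma {0, 1, 2} Jc"
    using J(2) unfolding Jc_def by auto
  define B where "B c = {\<omega> \<in> space M. \<forall>k\<in>Jc c. cell_inc g c k \<omega> \<in> S (c, k)}" for c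
  have "Measurable.pred (Pi\<^sub>M UNIV (\<lambda>_. count_space UNIV))
      (\<lambda>f::real \<Rightarrow> nat. \<forall>k\<in>Jc c. f (g (Suc k)) - f (g k) \<in> S (c, k))" for c
    using finite_Jc by measurable
  then have "prob (\<Inter>c\<in>{0, 1, 2}. B c) = (\<Prod>c\<in>{0, 1, 2}. prob (B c))"
    using indep_varsD[OF indep_drivers, of "{0, 1, 2}"
        "\<lambda>c. {f. \<forall>k\<in>Jc c. f (g (Suc k)) - f (g k) \<in> S (c, k)}"]
    unfolding B_def cell_inc_def driver_def
    by (auto simp: pred_def space_PiM Int_def conj_commute)
  moreover have "(\<Inter>j\<in>J. A j) = (\<Inter>c\<in>{0, 1, 2}. B c)"
  proof -
    have "(\<Inter>j\<in>J. A j) \<subseteq> space M"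
      using J(1) S by auto
    then show ?thesis
      using S J(2) unfolding B_def Jc_def by (auto; fastforce)
  qed
  moreover have "prob (B c) = (\<Prod>k\<in>Jc c. prob (A (c, k)))" for c
    using prob_cell_incs_one_driver[OF assms finite_Jc, where c = c and S = "\<lambda>k. S (c, k)"] S
    unfolding B_def Jc_def by simp
  moreover have "(\<Prod>j\<in>Sigma {0, 1, 2} Jc. prob (A j)) = (\<Prod>c\<in>{0, 1, 2}. \<Prod>k\<in>Jc c. prob (A (c, k)))"
    using prod.Sigma[of "{0, 1, 2::nat}" Jc "\<lambda>c k. prob (A (c, k))"] finite_Jc
    by (simp add: case_prod_eta)
  ultimately show "prob (\<Inter>j\<in>J. A j) = (\<Prod>j\<in>J. prob (A j))"
    unfolding J_eq by simp
qed

definition past :: "(nat \<Rightarrow> real) \<Rightarrow> nat \<Rightarrow> 'w measure"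
  where "past g i = sigma (space M) (\<Union>ck\<in>{0, 1, 2} \<times> {..<i}. cell_events g ck)"

lemma space_past [simp]: "space (past g i) = space M"
  and sets_past: "sets (past g i) = sigma_sets (space M) (\<Union>ck\<in>{0, 1, 2} \<times> {..<i}. cell_events g ck)"
  using cell_events_subset_events sets.sets_into_space unfolding past_def
  by (blast intro!: space_measure_of sets_measure_of)+

lemma subalgebra_past: "subalgebra M (past g i)"
  unfolding subalgebra_def sets_past
  using cell_events_subset_events by (auto intro!: sets.sigma_sets_subset)

lemma subalgebra_past_mono:
  assumes "i \<le> j"
  shows "subalgebra (past g j) (past g i)"
proof -
  have "(\<Union>ck\<in>{0, 1, 2} \<times> {..<i}. cell_events g ck) \<subseteq> (\<Union>ck\<in>{0, 1, 2} \<times> {..<j}. cell_events g ck)"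
    using assms by (intro UN_mono) auto
  then show ?thesis
    unfolding subalgebra_def sets_past by (simp add: sigma_sets_mono')
qed

lemma measurable_cell_inc_past:
  assumes "c \<in> {0, 1, 2}" "k < i"
  shows "cell_inc g c k \<in> measurable (past g i) (count_space UNIV)"
proof -
  have "cell_inc g c k -` {n} \<inter> space M \<in> cell_events g (c, k)" for n
    unfolding cell_events_def by auto
  then have "cell_inc g c k -` {n} \<inter> space M \<in> sets (past g i)" for n
    unfolding sets_past using assms by blast
  then show ?thesis
    by (simp add: measurable_count_space_eq2_countable)
qed

lemma prob_past_Int_cell_incs:
  assumes "time_grid g" and A: "A \<in> sets (past g i)"
  shows "prob (A \<inter> {\<omega>\<in>space M. \<forall>c\<in>{0, 1, 2}. cell_inc g c i \<omega> \<in> S c})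
    = prob A * (\<Prod>c\<in>{0, 1, 2}. measure_pmf.prob (cell_law g c i) (S c))"
proof -
  define I where "I j = (if j = 0 then {0, 1, 2} \<times> {..<i} else {(j - 1, i)})" for j :: nat
  have indep: "indep_sets (\<lambda>j. sigma_sets (space M) (\<Union>ck\<in>I j. cell_events g ck)) {0, 1, 2, 3}"
  proof (rule indep_sets_collect_sigma)
    show "indep_sets (cell_events g) (\<Union>j\<in>{0, 1, 2, 3}. I j)"
      by (rule indep_sets_mono_index[OF _ indep_sets_cell_events[OF assms(1)]]) (auto simp: I_def)
    show "disjoint_family_on I {0, 1, 2, 3}"
      unfolding disjoint_family_on_def I_def by auto
  qed (rule Int_stable_cell_events)
  define B where "B j = (if j = 0 then A else cell_inc g (j - 1) i -` S (j - 1) \<inter> space M)" for j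
  have "B j \<in> sigma_sets (space M) (\<Union>ck\<in>I j. cell_events g ck)" if "j \<in> {0, 1, 2, 3}" for j
  proof (cases "j = 0")
    case True
    then show ?thesis using A unfolding B_def I_def sets_past by simp
  next
    case False
    then have "B j \<in> (\<Union>ck\<in>I j. cell_events g ck)"
      unfolding B_def I_def cell_events_def by auto
    then show ?thesis by auto
  qed
  then have "prob (\<Inter>j\<in>{0, 1, 2, 3}. B j) = (\<Prod>j\<in>{0, 1, 2, 3}. prob (B j))"
    by (intro indep_setsD[OF indep]) auto
  moreover have "(\<Inter>j\<in>{0, 1, 2, 3}. B j) = A \<inter> {\<omega>\<in>space M. \<forall>c\<in>{0, 1, 2}. cell_inc g c i \<omega> \<in> S c}"
    using A sets.sets_into_space[of A "past g i"] unfolding B_def by auto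
  ultimately show ?thesis
    using prob_cell_inc[OF assms(1)] by (simp add: numeral_3_eq_3 numeral_2_eq_2 B_def mult.assoc)
qed

lemma measurable_y [measurable]: "(\<lambda>\<omega>. y \<omega> t) \<in> measurable M (count_space UNIV)"
  using measurable_driver[of 0] by simp

lemma sets_past_subset: "sets (past g i) \<subseteq> events"
  using subalgebra_past unfolding subalgebra_def by simp

lemma measurable_past_mono:
  "f \<in> measurable (past g i) N \<Longrightarrow> i \<le> j \<Longrightarrow> f \<in> measurable (past g j) N"
  by (rule measurable_from_subalg[OF subalgebra_past_mono])

lemma measurable_y_past:
  assumes "time_grid g"
  shows "(\<lambda>\<omega>. y \<omega> (g i)) \<in> measurable (past g i) (count_space UNIV)"
proof (induction i)
  case 0
  have "y \<omega> (g 0) = 0" if "\<omega> \<in> space M" for \<omega>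
    using assms counting_path_driver[OF that, of 0] by (simp add: time_grid_def counting_path_def)
  then show ?case
    by (subst measurable_cong[where g = "\<lambda>_. 0"]) auto
next
  case (Suc i)
  have "y \<omega> (g (Suc i)) = y \<omega> (g i) + cell_inc g 0 i \<omega>" if "\<omega> \<in> space M" for \<omega>
    using counting_path_mono[OF counting_path_driver[OF that, of 0]]
      time_grid_nonneg[OF assms] time_grid_less[OF assms, of i]
    by (simp add: cell_inc_def less_imp_le)
  moreover note [measurable] = measurable_past_mono[OF Suc.IH, of "Suc i"]
    measurable_cell_inc_past[of 0 i "Suc i" g]
  ultimately show ?case
    by (subst measurable_cong) auto
qed

text \<open>The dynamics of \<open>x\<close> as they would be if no cell contained two jumps of the drivers.\<close>

primrec chain :: "(nat \<Rightarrow> real) \<Rightarrow> nat \<Rightarrow> 'w \<Rightarrow> nat" where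
  "chain g 0 \<omega> = 0"
| "chain g (Suc i) \<omega> = chain g i \<omega> + cell_inc g 1 i \<omega>
     + (if y \<omega> (g i) < chain g i \<omega> then cell_inc g 2 i \<omega> else cell_inc g 0 i \<omega>)"

lemma measurable_chain_past:
  assumes "time_grid g"
  shows "chain g i \<in> measurable (past g i) (count_space UNIV)"
proof (induction i)
  case 0
  have "chain g 0 = (\<lambda>_. 0)" by auto
  then show ?case by simp
next
  case (Suc i)
  have "chain g (Suc i) = (\<lambda>\<omega>. chain g i \<omega> + cell_inc g 1 i \<omega>
     + (if y \<omega> (g i) < chain g i \<omega> then cell_inc g 2 i \<omega> else cell_inc g 0 i \<omega>))"
    by auto
  moreover note [measurable] = measurable_past_mono[OF Suc.IH, of "Suc i"]
    measurable_past_mono[OF measurable_y_past[OF assms], of i "Suc i"]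
    measurable_cell_inc_past[of _ i "Suc i" g]
  ultimately show ?case
    by simp
qed

lemma measurable_chain [measurable]: "chain g i \<in> measurable M (count_space UNIV)"
proof (induction i)
  case 0
  have "chain g 0 = (\<lambda>_. 0)" by auto
  then show ?case by simp
next
  case (Suc i)
  have "chain g (Suc i) = (\<lambda>\<omega>. chain g i \<omega> + cell_inc g 1 i \<omega>
     + (if y \<omega> (g i) < chain g i \<omega> then cell_inc g 2 i \<omega> else cell_inc g 0 i \<omega>))"
    by auto
  with Suc.IH show ?case
    by simp
qed

lemma chain_mono: "i \<le> j \<Longrightarrow> chain g i \<omega> \<le> chain g j \<omega>"
  by (induction j rule: dec_induct) auto

lemma sets_past_mono: "i \<le> j \<Longrightarrow> sets (past g i) \<subseteq> sets (past g j)"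
  using subalgebra_past_mono unfolding subalgebra_def by blast

lemma sets_past_chain_increment:
  assumes g: "time_grid g" and "i \<le> j"
  shows "{\<omega>\<in>space M. chain g j \<omega> - chain g i \<omega> \<in> S} \<in> sets (past g j)"
  using sets_Collect_diff_in[OF measurable_chain_past[OF g]
      measurable_past_mono[OF measurable_chain_past[OF g] \<open>i \<le> j\<close>], of S]
  by simp

lemma prob_past_Int_cell_sum:
  assumes g: "time_grid g" and A: "A \<in> sets (past g i)" and c: "c = 0 \<or> c = 2"
  shows "prob (A \<inter> {\<omega>\<in>space M. cell_inc g 1 i \<omega> + cell_inc g c i \<omega> = n})
    = prob A * pmf (poisson_pmf (\<alpha>0 * (g (Suc i) - g i))) n"
proof -
  let ?\<Delta> = "g (Suc i) - g i"
  have "0 < ?\<Delta>" using time_grid_less[OF g] by simp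
  have joint: "prob (A \<inter> {\<omega>\<in>space M. cell_inc g 1 i \<omega> = a \<and> cell_inc g c i \<omega> = b})
      = prob A * pmf (poisson_pmf ((\<alpha>0 - \<alpha>1) * ?\<Delta>)) a * pmf (poisson_pmf (\<alpha>1 * ?\<Delta>)) b" for a b
  proof -
    let ?S = "\<lambda>c'. if c' = 1 then {a} else if c' = c then {b} else UNIV"
    have "A \<inter> {\<omega>\<in>space M. cell_inc g 1 i \<omega> = a \<and> cell_inc g c i \<omega> = b}
        = A \<inter> {\<omega>\<in>space M. \<forall>c'\<in>{0, 1, 2}. cell_inc g c' i \<omega> \<in> ?S c'}"
      using c by auto
    then show ?thesis
      using prob_past_Int_cell_incs[OF g A, of ?S] c
      by (auto simp: cell_law_def measure_pmf_single mult.assoc)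
  qed
  have "A \<in> events" "0 < (\<alpha>0 - \<alpha>1) * ?\<Delta>" "0 < \<alpha>1 * ?\<Delta>"
    using A sets_past_subset rates \<open>0 < ?\<Delta>\<close> by auto
  from prob_Int_add_poisson[OF this(1) _ _ this(2,3) joint]
  have "prob (A \<inter> {\<omega>\<in>space M. cell_inc g 1 i \<omega> + cell_inc g c i \<omega> = n})
      = prob A * pmf (poisson_pmf ((\<alpha>0 - \<alpha>1) * ?\<Delta> + \<alpha>1 * ?\<Delta>)) n"
    by simp
  then show ?thesis
    by (simp add: algebra_simps)
qed

text \<open>Above the wall the chain follows \<open>q\<close>, on it \<open>y\<close>; both have rate \<open>\<alpha>1\<close> and the choice is
  made by the past.\<close>

lemma prob_chain_step:
  assumes g: "time_grid g" and A: "A \<in> sets (past g i)"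
  shows "prob (A \<inter> {\<omega>\<in>space M. chain g (Suc i) \<omega> - chain g i \<omega> = n})
    = prob A * pmf (poisson_pmf (\<alpha>0 * (g (Suc i) - g i))) n"
proof -
  let ?\<pi> = "pmf (poisson_pmf (\<alpha>0 * (g (Suc i) - g i))) n"
  define C where "C = {\<omega>\<in>space M. y \<omega> (g i) < chain g i \<omega>}"
  have "{\<omega>\<in>space (past g i). y \<omega> (g i) < chain g i \<omega>} \<in> sets (past g i)"
    by measurable (auto intro: borel_measurable_nat_count_space measurable_y_past[OF g]
        measurable_chain_past[OF g])
  then have "C \<in> sets (past g i)"
    by (simp add: C_def)
  then have AC: "A \<inter> C \<in> sets (past g i)" "A - C \<in> sets (past g i)"
    using A by auto
  then have events: "A \<inter> C \<in> events" "A - C \<in> events"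
    using sets_past_subset by auto
  let ?S = "\<lambda>c. {\<omega>\<in>space M. cell_inc g 1 i \<omega> + cell_inc g c i \<omega> = n}"
  have "A \<inter> {\<omega>\<in>space M. chain g (Suc i) \<omega> - chain g i \<omega> = n} = (A \<inter> C \<inter> ?S 2) \<union> ((A - C) \<inter> ?S 0)"
    unfolding C_def by auto
  then have "prob (A \<inter> {\<omega>\<in>space M. chain g (Suc i) \<omega> - chain g i \<omega> = n})
      = prob ((A \<inter> C \<inter> ?S 2) \<union> ((A - C) \<inter> ?S 0))"
    by simp
  also have "\<dots> = prob (A \<inter> C \<inter> ?S 2) + prob ((A - C) \<inter> ?S 0)"
    using events by (intro finite_measure_Union) auto
  also have "\<dots> = (prob (A \<inter> C) + prob (A - C)) * ?\<pi>"
    using prob_past_Int_cell_sum[OF g AC(1), of 2] prob_past_Int_cell_sum[OF g AC(2), of 0]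
    by (simp add: distrib_right)
  also have "prob (A \<inter> C) + prob (A - C) = prob (A \<inter> C \<union> (A - C))"
    using events by (intro finite_measure_Union[symmetric]) auto
  also have "A \<inter> C \<union> (A - C) = A"
    by (rule Int_Diff_Un)
  finally show ?thesis .
qed

lemma prob_chain_increment:
  assumes g: "time_grid g" and A: "A \<in> sets (past g i)" and "i < j"
  shows "prob (A \<inter> {\<omega>\<in>space M. chain g j \<omega> - chain g i \<omega> = n})
    = prob A * pmf (poisson_pmf (\<alpha>0 * (g j - g i))) n"
  using \<open>i < j\<close>
proof (induction j arbitrary: n)
  case 0
  then show ?case by simp
next
  case (Suc j)
  show ?case
  proof (cases "i = j")
    case True
    then show ?thesis using prob_chain_step[OF g A] by simp
  next
    case False
    with Suc.prems have "i < j" by simp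
    have joint: "prob (A \<inter> {\<omega>\<in>space M. chain g j \<omega> - chain g i \<omega> = a
          \<and> chain g (Suc j) \<omega> - chain g j \<omega> = b})
        = prob A * pmf (poisson_pmf (\<alpha>0 * (g j - g i))) a
            * pmf (poisson_pmf (\<alpha>0 * (g (Suc j) - g j))) b" for a b
    proof -
      define A' where "A' = A \<inter> {\<omega>\<in>space M. chain g j \<omega> - chain g i \<omega> = a}"
      have "A' \<in> sets (past g j)"
        using A sets_past_mono[of i j g] sets_past_chain_increment[OF g, of i j "{a}"] \<open>i < j\<close>
        unfolding A'_def by auto
      moreover have "A \<inter> {\<omega>\<in>space M. chain g j \<omega> - chain g i \<omega> = a
          \<and> chain g (Suc j) \<omega> - chain g j \<omega> = b}
          = A' \<inter> {\<omega>\<in>space M. chain g (Suc j) \<omega> - chain g j \<omega> = b}"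
        unfolding A'_def by blast
      ultimately show ?thesis
        using prob_chain_step[OF g, of A' j b] Suc.IH[OF \<open>i < j\<close>, of a]
        unfolding A'_def by (simp only:)
    qed
    have Aev: "A \<in> events" and pos: "0 < \<alpha>0 * (g j - g i)" "0 < \<alpha>0 * (g (Suc j) - g j)"
      using A sets_past_subset rates time_grid_less[OF g, of j] strict_monoD[of g i j] \<open>i < j\<close> g
      by (auto simp: time_grid_def)
    have "prob (A \<inter> {\<omega>\<in>space M. (chain g j \<omega> - chain g i \<omega>) + (chain g (Suc j) \<omega> - chain g j \<omega>) = n})
        = prob A * pmf (poisson_pmf (\<alpha>0 * (g j - g i) + \<alpha>0 * (g (Suc j) - g j))) n"
      by (rule prob_Int_add_poisson[OF Aev _ _ pos joint]) measurable
    moreover have "(chain g j \<omega> - chain g i \<omega>) + (chain g (Suc j) \<omega> - chain g j \<omega>)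
        = chain g (Suc j) \<omega> - chain g i \<omega>" for \<omega>
      using chain_mono[of i j g \<omega>] \<open>i < j\<close> by simp
    ultimately show ?thesis
      by (simp add: algebra_simps)
  qed
qed

lemma prob_chain_increment_in:
  assumes g: "time_grid g" and A: "A \<in> sets (past g i)" and "i < j"
  shows "prob (A \<inter> {\<omega>\<in>space M. chain g j \<omega> - chain g i \<omega> \<in> S})
    = prob A * measure_pmf.prob (poisson_pmf (\<alpha>0 * (g j - g i))) S"
  using A sets_past_subset prob_chain_increment[OF assms]
  by (intro prob_Int_in_eq_scaled_measure_pmf) auto

lemma prob_chain_blocks:
  assumes g: "time_grid g" and b: "strict_mono b"
  shows "prob {\<omega>\<in>space M. \<forall>j<m. chain g (b (Suc j)) \<omega> - chain g (b j) \<omega> \<in> S j}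
    = (\<Prod>j<m. measure_pmf.prob (poisson_pmf (\<alpha>0 * (g (b (Suc j)) - g (b j)))) (S j))"
proof -
  define E where "E m = {\<omega>\<in>space M. \<forall>j<m. chain g (b (Suc j)) \<omega> - chain g (b j) \<omega> \<in> S j}" for m
  have E_Suc: "E (Suc m) = E m \<inter> {\<omega>\<in>space M. chain g (b (Suc m)) \<omega> - chain g (b m) \<omega> \<in> S m}" for m
    unfolding E_def by (auto simp: less_Suc_eq)
  have past: "E m \<in> sets (past g (b m))" for m
  proof (induction m)
    case 0
    show ?case
      using sets.top[of "past g (b 0)"] by (simp add: E_def)
  next
    case (Suc m)
    have "b m \<le> b (Suc m)"
      using b by (simp add: strict_mono_less_eq)
    then show ?case
      using Suc.IH sets_past_mono[of "b m" "b (Suc m)" g] sets_past_chain_increment[OF g]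
      unfolding E_Suc by blast
  qed
  have "prob (E m) = (\<Prod>j<m. measure_pmf.prob (poisson_pmf (\<alpha>0 * (g (b (Suc j)) - g (b j)))) (S j))"
  proof (induction m)
    case 0
    then show ?case by (simp add: E_def prob_space)
  next
    case (Suc m)
    then show ?case
      unfolding E_Suc using prob_chain_increment_in[OF g past] b by (simp add: strict_mono_less)
  qed
  then show ?thesis
    unfolding E_def .
qed

lemma prob_cell_incs:
  assumes "time_grid g"
  shows "prob {\<omega>\<in>space M. \<forall>c\<in>{0, 1, 2}. cell_inc g c k \<omega> \<in> S c}
    = (\<Prod>c\<in>{0, 1, 2}. measure_pmf.prob (cell_law g c k) (S c))"
  using prob_past_Int_cell_incs[OF assms sets.top, of k S] by (simp add: prob_space Int_def)

definition cell_jumps :: "(nat \<Rightarrow> real) \<Rightarrow> nat \<Rightarrow> 'w \<Rightarrow> nat"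
  where "cell_jumps g k \<omega> = cell_inc g 0 k \<omega> + cell_inc g 1 k \<omega> + cell_inc g 2 k \<omega>"

lemma measurable_cell_jumps [measurable]: "cell_jumps g k \<in> measurable M (count_space UNIV)"
  unfolding cell_jumps_def[abs_def] by measurable

lemma prob_cell_jumps:
  assumes g: "time_grid g"
  shows "prob {\<omega>\<in>space M. cell_jumps g k \<omega> = n} = pmf (poisson_pmf ((\<alpha>0 + \<alpha>1) * (g (Suc k) - g k))) n"
proof -
  let ?\<Delta> = "g (Suc k) - g k"
  have "0 < ?\<Delta>" using time_grid_less[OF g] by simp
  have pos: "0 < rate c * ?\<Delta>" for c
    using rate_pos \<open>0 < ?\<Delta>\<close> by simp
  note cells = prob_cell_incs[OF g, of k]
  have marginal: "prob {\<omega>\<in>space M. cell_inc g 0 k \<omega> = a} = pmf (poisson_pmf (rate 0 * ?\<Delta>)) a" for a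
    using prob_cell_inc[OF g, of 0 k "{a}"]
    by (simp add: measure_pmf_single cell_law_def vimage_def Int_def conj_commute)
  have pair: "prob ({\<omega>\<in>space M. cell_inc g 0 k \<omega> = a} \<inter> {\<omega>\<in>space M. cell_inc g 1 k \<omega> + cell_inc g 2 k \<omega> = j})
      = prob {\<omega>\<in>space M. cell_inc g 0 k \<omega> = a} * pmf (poisson_pmf (rate 1 * ?\<Delta> + rate 2 * ?\<Delta>)) j"
    for a j
  proof (rule prob_Int_add_poisson[OF _ _ _ pos pos])
    fix i l
    have "{\<omega>\<in>space M. cell_inc g 0 k \<omega> = a} \<inter> {\<omega>\<in>space M. cell_inc g 1 k \<omega> = i \<and> cell_inc g 2 k \<omega> = l}
        = {\<omega>\<in>space M. \<forall>c\<in>{0, 1, 2}. cell_inc g c k \<omega> \<in> (if c = 0 then {a} else if c = 1 then {i} else {l})}"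
      by auto
    then show "prob ({\<omega>\<in>space M. cell_inc g 0 k \<omega> = a} \<inter> {\<omega>\<in>space M. cell_inc g 1 k \<omega> = i \<and> cell_inc g 2 k \<omega> = l})
        = prob {\<omega>\<in>space M. cell_inc g 0 k \<omega> = a} * pmf (poisson_pmf (rate 1 * ?\<Delta>)) i * pmf (poisson_pmf (rate 2 * ?\<Delta>)) l"
      using cells[of "\<lambda>c. if c = 0 then {a} else if c = 1 then {i} else {l}"] marginal
      by (simp add: measure_pmf_single cell_law_def mult.assoc)
  qed measurable
  have joint: "prob (space M \<inter> {\<omega>\<in>space M. cell_inc g 0 k \<omega> = i \<and> cell_inc g 1 k \<omega> + cell_inc g 2 k \<omega> = j})
      = prob (space M) * pmf (poisson_pmf (rate 0 * ?\<Delta>)) i * pmf (poisson_pmf (rate 1 * ?\<Delta> + rate 2 * ?\<Delta>)) j"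
    for i j
  proof -
    have "prob (space M \<inter> {\<omega>\<in>space M. cell_inc g 0 k \<omega> = i \<and> cell_inc g 1 k \<omega> + cell_inc g 2 k \<omega> = j})
        = prob ({\<omega>\<in>space M. cell_inc g 0 k \<omega> = i} \<inter> {\<omega>\<in>space M. cell_inc g 1 k \<omega> + cell_inc g 2 k \<omega> = j})"
      by (rule arg_cong[where f = prob]) auto
    also have "\<dots> = pmf (poisson_pmf (rate 0 * ?\<Delta>)) i * pmf (poisson_pmf (rate 1 * ?\<Delta> + rate 2 * ?\<Delta>)) j"
      by (simp only: pair marginal)
    finally show ?thesis
      by (simp add: prob_space)
  qed
  have "prob (space M \<inter> {\<omega>\<in>space M. cell_inc g 0 k \<omega> + (cell_inc g 1 k \<omega> + cell_inc g 2 k \<omega>) = n})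
      = prob (space M) * pmf (poisson_pmf (rate 0 * ?\<Delta> + (rate 1 * ?\<Delta> + rate 2 * ?\<Delta>))) n"
    by (rule prob_Int_add_poisson[OF sets.top _ _ pos add_pos_pos[OF pos pos] joint]) measurable
  then show ?thesis
    by (simp add: cell_jumps_def prob_space algebra_simps)
qed

lemma prob_cell_jumps_ge_2:
  assumes g: "time_grid g"
  shows "prob {\<omega>\<in>space M. 2 \<le> cell_jumps g k \<omega>} \<le> ((\<alpha>0 + \<alpha>1) * (g (Suc k) - g k))\<^sup>2"
proof -
  have "prob (space M \<inter> {\<omega>\<in>space M. cell_jumps g k \<omega> \<in> {n. 2 \<le> n}})
      = 1 * measure_pmf.prob (poisson_pmf ((\<alpha>0 + \<alpha>1) * (g (Suc k) - g k))) {n. 2 \<le> n}"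
    using prob_cell_jumps[OF g] by (intro prob_Int_in_eq_scaled_measure_pmf) (auto simp: Int_absorb1)
  moreover have "0 < (\<alpha>0 + \<alpha>1) * (g (Suc k) - g k)"
    using rates time_grid_less[OF g, of k] by simp
  ultimately show ?thesis
    using poisson_prob_at_least_2 by (simp add: Int_absorb1)
qed

definition double_jump :: "(nat \<Rightarrow> real) \<Rightarrow> nat \<Rightarrow> 'w set"
  where "double_jump g K = (\<Union>k<K. {\<omega>\<in>space M. 2 \<le> cell_jumps g k \<omega>})"

lemma double_jump_in_events: "double_jump g K \<in> events"
  unfolding double_jump_def by measurable

lemma prob_double_jump_le:
  assumes g: "time_grid g" and step: "\<And>k. k < K \<Longrightarrow> g (Suc k) - g k \<le> h"
  shows "prob (double_jump g K) \<le> (\<alpha>0 + \<alpha>1)\<^sup>2 * h * g K"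
proof -
  have "prob (double_jump g K) \<le> (\<Sum>k<K. prob {\<omega>\<in>space M. 2 \<le> cell_jumps g k \<omega>})"
    unfolding double_jump_def by (intro finite_measure_subadditive_finite) auto
  also have "\<dots> \<le> (\<Sum>k<K. (\<alpha>0 + \<alpha>1)\<^sup>2 * h * (g (Suc k) - g k))"
  proof (intro sum_mono)
    fix k assume "k \<in> {..<K}"
    have "0 \<le> g (Suc k) - g k"
      using time_grid_less[OF g, of k] by simp
    have "((\<alpha>0 + \<alpha>1) * (g (Suc k) - g k))\<^sup>2 = (\<alpha>0 + \<alpha>1)\<^sup>2 * ((g (Suc k) - g k) * (g (Suc k) - g k))"
      by (simp add: power2_eq_square algebra_simps)
    also have "\<dots> \<le> (\<alpha>0 + \<alpha>1)\<^sup>2 * (h * (g (Suc k) - g k))"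
      using step[of k] \<open>k \<in> {..<K}\<close> \<open>0 \<le> g (Suc k) - g k\<close>
      by (intro mult_left_mono mult_right_mono) auto
    finally have "((\<alpha>0 + \<alpha>1) * (g (Suc k) - g k))\<^sup>2 \<le> (\<alpha>0 + \<alpha>1)\<^sup>2 * h * (g (Suc k) - g k)"
      by (simp add: mult.assoc)
    then show "prob {\<omega>\<in>space M. 2 \<le> cell_jumps g k \<omega>} \<le> (\<alpha>0 + \<alpha>1)\<^sup>2 * h * (g (Suc k) - g k)"
      using prob_cell_jumps_ge_2[OF g, of k] by linarith
  qed
  also have "\<dots> = (\<alpha>0 + \<alpha>1)\<^sup>2 * h * g K"
    using g by (simp add: sum_distrib_left[symmetric] sum_lessThan_telescope time_grid_def)
  finally show ?thesis .
qed

lemma chain_eq_x: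
  assumes g: "time_grid g" and \<omega>: "\<omega> \<in> space M"
    and no_double_jump: "\<And>k. k < i \<Longrightarrow> cell_jumps g k \<omega> \<le> 1"
  shows "chain g i \<omega> = x \<omega> (g i) \<and> y \<omega> (g i) \<le> x \<omega> (g i)"
  using no_double_jump
proof (induction i)
  case 0
  then show ?case
    using g counting_path_x[OF \<omega>] counting_path_driver[OF \<omega>, of 0]
    by (simp add: time_grid_def counting_path_def)
next
  case (Suc i)
  then have IH: "chain g i \<omega> = x \<omega> (g i)" "y \<omega> (g i) \<le> x \<omega> (g i)"
    by auto
  have paths: "counting_path (y \<omega>)" "counting_path (p \<omega>)" "counting_path (q \<omega>)"
    using counting_path_driver[OF \<omega>, of 0] counting_path_driver[OF \<omega>, of 1]
      counting_path_driver[OF \<omega>, of 2] by simp_all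
  have "0 \<le> g i" "g i < g (Suc i)"
    using time_grid_nonneg[OF g] time_grid_less[OF g] by auto
  moreover have "y \<omega> (g i) \<le> y \<omega> (g (Suc i))" "p \<omega> (g i) \<le> p \<omega> (g (Suc i))"
    "q \<omega> (g i) \<le> q \<omega> (g (Suc i))"
    using paths \<open>0 \<le> g i\<close> \<open>g i < g (Suc i)\<close> by (auto intro: counting_path_mono)
  then have "y \<omega> (g (Suc i)) + p \<omega> (g (Suc i)) + q \<omega> (g (Suc i))
      \<le> Suc (y \<omega> (g i) + p \<omega> (g i) + q \<omega> (g i))"
    using Suc.prems[of i] by (simp add: cell_jumps_def cell_inc_def)
  ultimately have "x \<omega> (g (Suc i)) = x \<omega> (g i) + (p \<omega> (g (Suc i)) - p \<omega> (g i))
      + (if y \<omega> (g i) < x \<omega> (g i) then q \<omega> (g (Suc i)) - q \<omega> (g i) else y \<omega> (g (Suc i)) - y \<omega> (g i))"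
    "y \<omega> (g (Suc i)) \<le> x \<omega> (g (Suc i))"
    using pushed_jumps_step[OF paths counting_path_x[OF \<omega>] pushed_jumps_x[OF \<omega>]] IH(2) by blast+
  then show ?case
    using IH by (simp add: cell_inc_def)
qed

lemma chain_eq_x_outside_double_jump:
  assumes g: "time_grid g" and \<omega>: "\<omega> \<in> space M - double_jump g K" and "i \<le> K"
  shows "chain g i \<omega> = x \<omega> (g i)"
proof -
  have "cell_jumps g k \<omega> \<le> 1" if "k < i" for k
  proof -
    have "\<not> 2 \<le> cell_jumps g k \<omega>"
      using \<omega> that \<open>i \<le> K\<close> unfolding double_jump_def by auto
    then show ?thesis
      by simp
  qed
  then show ?thesis
    using chain_eq_x[OF g, of \<omega> i] \<omega> by blast
qed

section \<open>Finite-dimensional distributions of \<open>x\<close>\<close>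

lemma prob_x_increments_approx:
  assumes u: "time_grid u"
  shows "\<bar>prob {\<omega>\<in>space M. \<forall>j<m. x \<omega> (u (d + Suc j)) - x \<omega> (u (d + j)) \<in> S j}
      - (\<Prod>j<m. measure_pmf.prob (poisson_pmf (\<alpha>0 * (u (d + Suc j) - u (d + j)))) (S j))\<bar>
    \<le> (\<alpha>0 + \<alpha>1)\<^sup>2 * (u (d + m))\<^sup>2 / 2^n"
proof -
  define g where "g = dyadic_refinement u n"
  define b where "b j = (d + j) * 2^n" for j
  define K where "K = b m"
  define E where "E = {\<omega>\<in>space M. \<forall>j<m. x \<omega> (u (d + Suc j)) - x \<omega> (u (d + j)) \<in> S j}"
  define E' where "E' = {\<omega>\<in>space M. \<forall>j<m. chain g (b (Suc j)) \<omega> - chain g (b j) \<omega> \<in> S j}"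
  have g: "time_grid g"
    unfolding g_def by (rule time_grid_dyadic_refinement[OF u])
  have gb: "g (b j) = u (d + j)" for j
    unfolding g_def b_def by (rule dyadic_refinement_block)
  have b: "strict_mono b"
    unfolding b_def strict_mono_def by simp
  have "prob E' = (\<Prod>j<m. measure_pmf.prob (poisson_pmf (\<alpha>0 * (u (d + Suc j) - u (d + j)))) (S j))"
    unfolding E'_def prob_chain_blocks[OF g b] gb by simp
  moreover have "prob (double_jump g K) \<le> (\<alpha>0 + \<alpha>1)\<^sup>2 * (u (d + m) / 2^n) * g K"
    by (rule prob_double_jump_le[OF g])
      (use dyadic_refinement_step_le[OF u] in \<open>simp add: g_def K_def b_def\<close>)
  moreover have "E - double_jump g K = E' - double_jump g K"
  proof -
    have "chain g (b j) \<omega> = x \<omega> (u (d + j))" if "\<omega> \<in> space M - double_jump g K" "j \<le> m" for \<omega> j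
      using chain_eq_x_outside_double_jump[OF g that(1), of "b j"] b that(2) gb
      by (simp add: K_def strict_mono_less_eq)
    then show ?thesis
      unfolding E_def E'_def by auto
  qed
  then have "\<bar>prob E - prob E'\<bar> \<le> prob (double_jump g K)"
    using double_jump_in_events by (intro prob_diff_le_if_agree_outside) (auto simp: E_def E'_def)
  ultimately show ?thesis
    unfolding E_def using gb[of m] by (simp add: K_def power2_eq_square)
qed

lemma prob_x_increments_on_grid:
  assumes u: "time_grid u"
  shows "prob {\<omega>\<in>space M. \<forall>j<m. x \<omega> (u (d + Suc j)) - x \<omega> (u (d + j)) \<in> S j}
    = (\<Prod>j<m. measure_pmf.prob (poisson_pmf (\<alpha>0 * (u (d + Suc j) - u (d + j)))) (S j))"
proof -
  let ?err = "\<bar>prob {\<omega>\<in>space M. \<forall>j<m. x \<omega> (u (d + Suc j)) - x \<omega> (u (d + j)) \<in> S j}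
    - (\<Prod>j<m. measure_pmf.prob (poisson_pmf (\<alpha>0 * (u (d + Suc j) - u (d + j)))) (S j))\<bar>"
  have "(\<lambda>n. (\<alpha>0 + \<alpha>1)\<^sup>2 * (u (d + m))\<^sup>2 / 2^n) \<longlonglongrightarrow> 0"
    by (rule LIMSEQ_divide_realpow_zero) simp
  then have "?err \<le> 0"
    using prob_x_increments_approx[OF u] by (intro LIMSEQ_le_const) auto
  then show ?thesis
    by simp
qed

lemma prob_x_increments:
  assumes ts: "0 \<le> ts 0" "\<forall>i<k. ts i < ts (Suc i)"
  shows "prob {\<omega>\<in>space M. \<forall>i<k. x \<omega> (ts (Suc i)) - x \<omega> (ts i) \<in> S i}
    = (\<Prod>i<k. measure_pmf.prob (poisson_pmf (\<alpha>0 * (ts (Suc i) - ts i))) (S i))"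
proof -
  obtain u d where u: "time_grid u" and ts_eq: "\<And>i. i \<le> k \<Longrightarrow> u (d + i) = ts i"
    using time_grid_through[OF ts] by blast
  have ts_eq_Suc: "u (d + Suc i) = ts (Suc i)" if "i < k" for i
    using ts_eq[of "Suc i"] that by simp
  have "{\<omega>\<in>space M. \<forall>i<k. x \<omega> (ts (Suc i)) - x \<omega> (ts i) \<in> S i}
      = {\<omega>\<in>space M. \<forall>i<k. x \<omega> (u (d + Suc i)) - x \<omega> (u (d + i)) \<in> S i}"
    using ts_eq ts_eq_Suc by (auto simp del: add_Suc_right)
  moreover have "(\<Prod>i<k. measure_pmf.prob (poisson_pmf (\<alpha>0 * (ts (Suc i) - ts i))) (S i))
      = (\<Prod>i<k. measure_pmf.prob (poisson_pmf (\<alpha>0 * (u (d + Suc i) - u (d + i)))) (S i))"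
    using ts_eq ts_eq_Suc by (intro prod.cong) (auto simp del: add_Suc_right)
  ultimately show ?thesis
    using prob_x_increments_on_grid[OF u] by simp
qed

lemma indep_vars_x_increments:
  assumes ts: "0 \<le> ts 0" "\<forall>i<k. ts i < ts (Suc i)"
  shows "indep_vars (\<lambda>_. count_space UNIV) (\<lambda>i \<omega>. x \<omega> (ts (Suc i)) - x \<omega> (ts i)) {..<k}"
  unfolding indep_vars_def2
proof (intro conjI ballI indep_setsI)
  let ?X = "\<lambda>i \<omega>. x \<omega> (ts (Suc i)) - x \<omega> (ts i)"
  let ?\<pi> = "\<lambda>i. measure_pmf.prob (poisson_pmf (\<alpha>0 * (ts (Suc i) - ts i)))"
  show "?X i \<in> measurable M (count_space UNIV)" for i
    by measurable
  then show "{?X i -` A \<inter> space M |A. A \<in> sets (count_space UNIV)} \<subseteq> events" for i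
    by (auto intro: measurable_sets)
  fix A J assume J: "J \<noteq> {}" "J \<subseteq> {..<k}" "finite J"
    and A: "\<forall>j\<in>J. A j \<in> {?X j -` A \<inter> space M |A. A \<in> sets (count_space UNIV)}"
  then have "\<forall>j\<in>J. \<exists>T. A j = ?X j -` T \<inter> space M"
    by auto
  then obtain T where T: "\<And>j. j \<in> J \<Longrightarrow> A j = ?X j -` T j \<inter> space M"
    by metis
  have prob_eq: "prob {\<omega>\<in>space M. \<forall>i<k. ?X i \<omega> \<in> (if i \<in> I then T i else UNIV)} = (\<Prod>i\<in>I. ?\<pi> i (T i))"
    if "I \<subseteq> {..<k}" for I
  proof -
    have "(\<Prod>i<k. ?\<pi> i (if i \<in> I then T i else UNIV)) = (\<Prod>i\<in>I. ?\<pi> i (T i))"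
      using that by (intro prod.mono_neutral_cong_right) auto
    then show ?thesis
      using prob_x_increments[OF ts] by simp
  qed
  have "(\<Inter>j\<in>J. A j) = {\<omega>\<in>space M. \<forall>i<k. ?X i \<omega> \<in> (if i \<in> J then T i else UNIV)}"
    using J T by auto
  also have "prob \<dots> = (\<Prod>j\<in>J. ?\<pi> j (T j))"
    using prob_eq[OF J(2)] .
  also have "\<dots> = (\<Prod>j\<in>J. prob (A j))"
  proof (rule prod.cong[OF refl])
    fix j assume "j \<in> J"
    then have "prob (A j) = prob {\<omega>\<in>space M. \<forall>i<k. ?X i \<omega> \<in> (if i \<in> {j} then T i else UNIV)}"
      using T J(2) by (intro arg_cong[where f = prob]) auto
    also have "\<dots> = (\<Prod>i\<in>{j}. ?\<pi> i (T i))"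
      using \<open>j \<in> J\<close> J(2) by (intro prob_eq) auto
    finally show "?\<pi> j (T j) = prob (A j)"
      by simp
  qed
  finally show "prob (\<Inter>j\<in>J. A j) = (\<Prod>j\<in>J. prob (A j))" .
qed

lemma distr_x_increment:
  assumes "0 \<le> s" "s < t"
  shows "distr M (count_space UNIV) (\<lambda>\<omega>. x \<omega> t - x \<omega> s) = measure_pmf (poisson_pmf (\<alpha>0 * (t - s)))"
proof (rule measure_eqI)
  fix A assume "A \<in> sets (distr M (count_space UNIV) (\<lambda>\<omega>. x \<omega> t - x \<omega> s))"
  have "prob {\<omega>\<in>space M. \<forall>i<1. x \<omega> ((\<lambda>i. if i = 0 then s else t) (Suc i))
      - x \<omega> ((\<lambda>i. if i = 0 then s else t) i) \<in> A}
    = (\<Prod>i<1. measure_pmf.prob (poisson_pmf (\<alpha>0 * ((\<lambda>i. if i = 0 then s else t) (Suc i)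
      - (\<lambda>i. if i = 0 then s else t) i))) A)"
    using assms by (intro prob_x_increments) auto
  then have "prob ((\<lambda>\<omega>. x \<omega> t - x \<omega> s) -` A \<inter> space M) = measure_pmf.prob (poisson_pmf (\<alpha>0 * (t - s))) A"
    by (simp add: Int_def conj_commute vimage_def)
  then show "emeasure (distr M (count_space UNIV) (\<lambda>\<omega>. x \<omega> t - x \<omega> s)) A
      = emeasure (measure_pmf (poisson_pmf (\<alpha>0 * (t - s)))) A"
    by (simp add: emeasure_distr emeasure_eq_measure measure_pmf.emeasure_eq_measure)
qed simp

lemma poisson_process_x: "poisson_process M \<alpha>0 x"
  unfolding poisson_process_def
  using counting_path_x measurable_x indep_vars_x_increments distr_x_increment by blast

end

theorem theorem1p3:
  fixes M :: "'w measure" and \<alpha>0 \<alpha>1 :: real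
    and y p q x :: "'w \<Rightarrow> real \<Rightarrow> nat"
  assumes "prob_space M"
    and "\<alpha>0 > \<alpha>1" and "\<alpha>1 > 0"
    and "poisson_process M \<alpha>1 y"
    and "poisson_process M (\<alpha>0 - \<alpha>1) p"
    and "poisson_process M \<alpha>1 q"
    and "prob_space.indep_vars M (\<lambda>_. Pi\<^sub>M UNIV (\<lambda>_. count_space UNIV))
           (\<lambda>i. if i = (0::nat) then y else if i = 1 then p else q) {0, 1, 2}"
    and "\<forall>t. (\<lambda>\<omega>. x \<omega> t) \<in> measurable M (count_space UNIV)"
    and "\<forall>\<omega>\<in>space M. counting_path (x \<omega>)"
    and "\<forall>\<omega>\<in>space M. \<forall>t>0.
           x \<omega> t = lft (x \<omega>) t
             + (if p \<omega> t \<noteq> lft (p \<omega>) t then 1 else 0)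
             + (if q \<omega> t \<noteq> lft (q \<omega>) t \<and> lft (x \<omega>) t > lft (y \<omega>) t then 1 else 0)
             + (if y \<omega> t \<noteq> lft (y \<omega>) t \<and> lft (x \<omega>) t = lft (y \<omega>) t then 1 else 0)"
  shows "poisson_process M \<alpha>0 x"
proof -
  interpret pushed_poisson M \<alpha>0 \<alpha>1 y p q x
    using assms unfolding pushed_poisson_def pushed_poisson_axioms_def pushed_jumps_def by blast
  show ?thesis
    by (rule poisson_process_x)
qed

end
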